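(* Let $D\subseteq U$ be compact with diameter $\operatorname{diam}(D)=\max_{d,d'\in D}\rho(d,d')$, let $\epsilon\ge0$, $0\le\delta\le1$, and let $\{X_d:\Omega\to U\mid d\in D\}$ be a family of measurable maps such that $$\mathbb{P}(X_d\in A)\le e^\epsilon\,\mathbb{P}(X_{d'}\in A)+\delta$$ for all $d,d'\in D$ and all $A\in\mathcal{A}_U$. Then $$\mathcal{E}:=\sup_{d\in D}\mathbb{E}[\rho(X_d,d)]\ \ge\ (1-\delta)\,\frac{\operatorname{diam}(D)}{2(1+e^\epsilon)}.$$
   Context: $(U,\rho)$ is a metric space with Borel $\sigma$-algebra $\mathcal{A}_U$, and $(\Omega,\mathcal{F},\mathbb{P})$ is a probability space. $\rho(X_d,d)$ is a nonnegative random variable; its expectation may be $+\infty$. *)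

theory Defs
  imports "HOL-Probability.Probability"
begin

end

theory Submission
  imports Defs
begin

text \<open>Pick \<open>a, b \<in> D\<close> with \<open>dist a b = diam D\<close> and let \<open>B\<close> be the open ball of radius
  \<open>diam D / 2\<close> around \<open>b\<close>. On \<open>X\<^sub>a \<in> B\<close> the triangle inequality forces \<open>dist X\<^sub>a a \<ge> diam D / 2\<close>,
  and on \<open>X\<^sub>b \<notin> B\<close> we have \<open>dist X\<^sub>b b \<ge> diam D / 2\<close>. Writing \<open>p = P(X\<^sub>a \<in> B)\<close>,
  \<open>q = P(X\<^sub>b \<in> B)\<close> and \<open>E\<close> for the supremum, Markov's inequality gives \<open>E \<ge> diam D / 2 \<cdot> p\<close> and
  \<open>E \<ge> diam D / 2 \<cdot> (1 - q)\<close>, while the hypothesis gives \<open>q \<le> e\<^sup>\<epsilon> p + \<delta>\<close>; eliminating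
  \<open>p\<close> and \<open>q\<close> yields the bound.\<close>

lemma nn_integral_ge_scaled_measure:
  assumes "finite_measure M" and "S \<in> sets M" and "c \<ge> 0"
    and "\<And>\<omega>. \<omega> \<in> S \<Longrightarrow> c \<le> f \<omega>"
  shows "ennreal (c * measure M S) \<le> (\<integral>\<^sup>+ \<omega>. ennreal (f \<omega>) \<partial>M)"
proof -
  interpret finite_measure M by (rule assms(1))
  have "ennreal (c * measure M S) = (\<integral>\<^sup>+ \<omega>. ennreal c * indicator S \<omega> \<partial>M)"
    using assms(2,3) by (simp add: emeasure_eq_measure ennreal_mult nn_integral_cmult_indicator)
  also have "\<dots> \<le> (\<integral>\<^sup>+ \<omega>. ennreal (f \<omega>) \<partial>M)"
    by (rule nn_integral_mono) (auto simp: indicator_def assms(4) ennreal_leI)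
  finally show ?thesis .
qed

lemma sets_Collect_mem_ball:
  assumes "X \<in> borel_measurable M"
  shows "{\<omega> \<in> space M. X \<omega> \<in> ball b r} \<in> sets M"
  using measurable_sets[OF assms borel_open[OF open_ball]]
  by (simp add: vimage_def Int_def conj_commute del: mem_ball)

lemma (in prob_space) nn_integral_dist_ge_prob_far_ball:
  assumes "X \<in> borel_measurable M" and "r \<ge> 0" and "2 * r \<le> dist a b"
  shows "ennreal (r * prob {\<omega> \<in> space M. X \<omega> \<in> ball b r})
           \<le> (\<integral>\<^sup>+ \<omega>. ennreal (dist (X \<omega>) a) \<partial>M)"
proof (rule nn_integral_ge_scaled_measure[OF finite_measure_axioms _ assms(2)])
  show "{\<omega> \<in> space M. X \<omega> \<in> ball b r} \<in> events"
    using assms(1) by (rule sets_Collect_mem_ball)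
  fix \<omega> assume "\<omega> \<in> {\<omega> \<in> space M. X \<omega> \<in> ball b r}"
  then show "r \<le> dist (X \<omega>) a"
    using dist_triangle3[of a b "X \<omega>"] assms(3) by (simp add: dist_commute)
qed

lemma (in prob_space) nn_integral_dist_ge_prob_outside_ball:
  assumes "X \<in> borel_measurable M" and "r \<ge> 0"
  shows "ennreal (r * (1 - prob {\<omega> \<in> space M. X \<omega> \<in> ball b r}))
           \<le> (\<integral>\<^sup>+ \<omega>. ennreal (dist (X \<omega>) b) \<partial>M)"
proof -
  let ?S = "{\<omega> \<in> space M. X \<omega> \<in> ball b r}"
  have S: "?S \<in> events"
    using assms(1) by (rule sets_Collect_mem_ball)
  have "ennreal (r * (1 - prob ?S)) = ennreal (r * prob (space M - ?S))"
    using prob_compl[OF S] by simp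
  also have "\<dots> \<le> (\<integral>\<^sup>+ \<omega>. ennreal (dist (X \<omega>) b) \<partial>M)"
    by (rule nn_integral_ge_scaled_measure[OF finite_measure_axioms _ assms(2)])
      (use S in \<open>auto simp: dist_commute\<close>)
  finally show ?thesis .
qed

lemma ennreal_two_point_lower_bound:
  fixes s :: ennreal and r p q e \<delta> :: real
  assumes "ennreal (r * p) \<le> s" and "ennreal (r * (1 - q)) \<le> s"
    and "q \<le> e * p + \<delta>" and "r \<ge> 0" and "p \<ge> 0" and "q \<le> 1" and "e > 0"
  shows "ennreal (r * (1 - \<delta>) / (1 + e)) \<le> s"
proof (cases "s = \<infinity>")
  case False
  then obtain t where s: "s = ennreal t" and "t \<ge> 0"
    by (cases s) auto
  have rp: "r * p \<le> t" and rq: "r * (1 - q) \<le> t"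
    using assms(1,2,4,5,6) s \<open>t \<ge> 0\<close> by (simp_all add: ennreal_le_iff)
  have "r * (1 - \<delta>) \<le> r * (1 - q) + e * (r * p)"
    using mult_left_mono[OF assms(3) assms(4)] by (simp add: algebra_simps)
  also have "\<dots> \<le> t + e * t"
    using rp rq assms(7) by (intro add_mono mult_left_mono) auto
  finally have "r * (1 - \<delta>) / (1 + e) \<le> t"
    using assms(7) by (simp add: pos_divide_le_eq algebra_simps)
  then show ?thesis using s by (simp add: ennreal_leI)
qed simp

theorem mainTheorem11:
  fixes M :: "'w measure" and D :: "'a::metric_space set"
    and X :: "'a \<Rightarrow> 'w \<Rightarrow> 'a" and \<epsilon> \<delta> :: real
  assumes "prob_space M"
    and "compact D" and "D \<noteq> {}"
    and "\<epsilon> \<ge> 0" and "0 \<le> \<delta>" and "\<delta> \<le> 1"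
    and "\<And>d. d \<in> D \<Longrightarrow> X d \<in> M \<rightarrow>\<^sub>M borel"
    and "\<And>d d' A. d \<in> D \<Longrightarrow> d' \<in> D \<Longrightarrow> A \<in> sets borel \<Longrightarrow>
           measure M {\<omega> \<in> space M. X d \<omega> \<in> A}
             \<le> exp \<epsilon> * measure M {\<omega> \<in> space M. X d' \<omega> \<in> A} + \<delta>"
  shows "(SUP d\<in>D. \<integral>\<^sup>+ \<omega>. ennreal (dist (X d \<omega>) d) \<partial>M)
           \<ge> ennreal ((1 - \<delta>) * diameter D / (2 * (1 + exp \<epsilon>)))"
proof -
  interpret prob_space M by (rule assms(1))
  obtain a b where a: "a \<in> D" and b: "b \<in> D" and ab: "dist a b = diameter D"
    using diameter_compact_attained[OF assms(2,3)] by blast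
  define r where "r = diameter D / 2"
  define E where "E = (SUP d\<in>D. \<integral>\<^sup>+ \<omega>. ennreal (dist (X d \<omega>) d) \<partial>M)"
  define p where "p = prob {\<omega> \<in> space M. X a \<omega> \<in> ball b r}"
  define q where "q = prob {\<omega> \<in> space M. X b \<omega> \<in> ball b r}"
  have r: "r \<ge> 0" unfolding r_def using ab zero_le_dist[of a b] by linarith
  have "ennreal (r * p) \<le> (\<integral>\<^sup>+ \<omega>. ennreal (dist (X a \<omega>) a) \<partial>M)"
    unfolding p_def using assms(7)[OF a] r by (rule nn_integral_dist_ge_prob_far_ball) (simp add: r_def ab)
  also have "\<dots> \<le> E" unfolding E_def using a by (rule SUP_upper)
  finally have Ea: "ennreal (r * p) \<le> E" .
  have "ennreal (r * (1 - q)) \<le> (\<integral>\<^sup>+ \<omega>. ennreal (dist (X b \<omega>) b) \<partial>M)"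
    unfolding q_def using assms(7)[OF b] r by (rule nn_integral_dist_ge_prob_outside_ball)
  also have "\<dots> \<le> E" unfolding E_def using b by (rule SUP_upper)
  finally have Eb: "ennreal (r * (1 - q)) \<le> E" .
  have "q \<le> exp \<epsilon> * p + \<delta>"
    unfolding p_def q_def using assms(8)[OF b a borel_open[OF open_ball]] .
  from ennreal_two_point_lower_bound[OF Ea Eb this r] show ?thesis
    by (simp add: E_def r_def p_def q_def mult.commute)
qed

end
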